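(* Let $f:X\to X$ be a continuous map on a metric space $(X,d)$. The following are equivalent: (i) $(\mathcal{K}(X),\overline f)$ has the specification property; (ii) $(\mathcal{F}_\infty(X),\hat f)$ has the specification property; (iii) $(\mathcal{F}_0(X),\hat f)$ has the specification property; (iv) $(\mathcal{F}_S(X),\hat f)$ has the specification property; (v) $(\mathcal{F}_E(X),\hat f)$ has the specification property.
   Context: A continuous map $g$ on a metric space $(Y,\rho)$ has the specification property if for every $\varepsilon>0$ there is $N_\varepsilon\in\mathbb{N}$ such that for every integer $s\ge2$, every $y_1,\dots,y_s\in Y$ and every integers $0=i_1\le j_1<i_2\le j_2<\dots<i_s\le j_s$ with $i_{r+1}-j_r\ge N_\varepsilon$ for $1\le r<s$, there is $x\in Y$ with $\rho(g^j(x),g^j(y_r))<\varepsilon$ for all $1\le r\le s$ and $i_r\le j\le j_r$, and $g^{N_\varepsilon+j_s}(x)=x$. $\mathbb{I}=[0,1]$. Fuzzy setting: for $u:X\to\mathbb{I}$, $u_\alpha=\{x:u(x)\ge\alpha\}$ ($\alpha\in]0,1]$), $u_0=\overline{\{x:u(x)>0\}}$. $\mathcal{F}(X)$: upper-semicontinuous $u:X\to\mathbb{I}$ with $u_0$ compact and $u_1\ne\varnothing$. $\mathcal{K}(X)$: non-empty compact subsets with Hausdorff metric $d_H$; $\overline f(K)=f(K)$. Zadeh extension: $\hat f(u)(x)=\sup\{u(y):f(y)=x\}$ (and $0$ if $f^{-1}(\{x\})=\varnothing$). Metrics on $\mathcal{F}(X)$: $d_\infty(u,v)=\sup_{\alpha\in\mathbb{I}}d_H(u_\alpha,v_\alpha)$;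 $d_0(u,v)=\inf\{\varepsilon>0:\exists\xi\in\mathcal{T},\ \sup_\alpha|\xi(\alpha)-\alpha|\le\varepsilon,\ d_\infty(u,\xi\circ v)\le\varepsilon\}$ with $\mathcal{T}$ the strictly increasing homeomorphisms of $\mathbb{I}$; with $\overline d((x,\alpha),(y,\beta))=\max\{d(x,y),|\alpha-\beta|\}$, $\operatorname{end}(u)=\{(x,\alpha):u(x)\ge\alpha\}$, $\operatorname{send}(u)=\operatorname{end}(u)\cap(u_0\times\mathbb{I})$, $d_E$ and $d_S$ are the $\overline d$-Hausdorff distances of endographs and sendographs respectively. $\mathcal{F}_\rho(X)$ denotes $(\mathcal{F}(X),\rho)$. *)

theory Defs
  imports "HOL-Analysis.Analysis"
begin

definition spec_prop :: "'b set \<Rightarrow> ('b \<Rightarrow> 'b \<Rightarrow> real) \<Rightarrow> ('b \<Rightarrow> 'b) \<Rightarrow> bool" where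
  "spec_prop Y \<rho> g \<longleftrightarrow>
     (\<forall>\<epsilon>>0. \<exists>N::nat. N \<ge> 1 \<and>
        (\<forall>(s::nat) (y::nat \<Rightarrow> 'b) (i::nat \<Rightarrow> nat) (j::nat \<Rightarrow> nat).
           s \<ge> 2 \<and> (\<forall>r\<in>{1..s}. y r \<in> Y) \<and> i 1 = 0 \<and>
           (\<forall>r\<in>{1..s}. i r \<le> j r) \<and>
           (\<forall>r\<in>{1..<s}. j r < i (r + 1) \<and> N \<le> i (r + 1) - j r)
           \<longrightarrow> (\<exists>x\<in>Y. (\<forall>r\<in>{1..s}. \<forall>k\<in>{i r..j r}. \<rho> ((g ^^ k) x) ((g ^^ k) (y r)) < \<epsilon>)
                     \<and> (g ^^ (N + j s)) x = x)))"

text \<open>Hausdorff distance w.r.t. an arbitrary metric rho (used on non-empty sets).\<close>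
definition hdist :: "('b \<Rightarrow> 'b \<Rightarrow> real) \<Rightarrow> 'b set \<Rightarrow> 'b set \<Rightarrow> real" where
  "hdist \<rho> A B = max (SUP a\<in>A. INF b\<in>B. \<rho> a b) (SUP b\<in>B. INF a\<in>A. \<rho> a b)"

definition Kspace :: "'a::metric_space set set" where
  "Kspace = {K. compact K \<and> K \<noteq> {}}"

definition dH :: "'a::metric_space set \<Rightarrow> 'a set \<Rightarrow> real" where
  "dH = hdist dist"

definition fbar :: "('a \<Rightarrow> 'a) \<Rightarrow> 'a set \<Rightarrow> 'a set" where
  "fbar f K = f ` K"

definition level :: "('a::topological_space \<Rightarrow> real) \<Rightarrow> real \<Rightarrow> 'a set" where
  "level u \<alpha> = (if \<alpha> = 0 then closure {x. u x > 0} else {x. u x \<ge> \<alpha>})"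

definition usc :: "('a::topological_space \<Rightarrow> real) \<Rightarrow> bool" where
  "usc u \<longleftrightarrow> (\<forall>a. open {x. u x < a})"

definition Fspace :: "('a::metric_space \<Rightarrow> real) set" where
  "Fspace = {u. (\<forall>x. 0 \<le> u x \<and> u x \<le> 1) \<and> usc u \<and> compact (level u 0) \<and> level u 1 \<noteq> {}}"

definition zadeh :: "('a \<Rightarrow> 'a) \<Rightarrow> ('a \<Rightarrow> real) \<Rightarrow> ('a \<Rightarrow> real)" where
  "zadeh f u x = (if f -` {x} = {} then 0 else Sup (u ` (f -` {x})))"

definition d_inf :: "('a::metric_space \<Rightarrow> real) \<Rightarrow> ('a \<Rightarrow> real) \<Rightarrow> real" where
  "d_inf u v = (SUP \<alpha>\<in>{0..1}. dH (level u \<alpha>) (level v \<alpha>))"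

definition Tset :: "(real \<Rightarrow> real) set" where
  "Tset = {\<xi>. strict_mono_on {0..1} \<xi> \<and> (\<exists>\<eta>. homeomorphism {0..1} {0..1} \<xi> \<eta>)}"

definition d_0 :: "('a::metric_space \<Rightarrow> real) \<Rightarrow> ('a \<Rightarrow> real) \<Rightarrow> real" where
  "d_0 u v = Inf {\<epsilon>. \<epsilon> > 0 \<and> (\<exists>\<xi>\<in>Tset. (\<forall>\<alpha>\<in>{0..1}. \<bar>\<xi> \<alpha> - \<alpha>\<bar> \<le> \<epsilon>) \<and> d_inf u (\<xi> \<circ> v) \<le> \<epsilon>)}"

definition dbar :: "('a::metric_space \<times> real) \<Rightarrow> ('a \<times> real) \<Rightarrow> real" where
  "dbar p q = max (dist (fst p) (fst q)) \<bar>snd p - snd q\<bar>"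

definition endo :: "('a::topological_space \<Rightarrow> real) \<Rightarrow> ('a \<times> real) set" where
  "endo u = {(x, \<alpha>). \<alpha> \<in> {0..1} \<and> u x \<ge> \<alpha>}"

definition sendo :: "('a::topological_space \<Rightarrow> real) \<Rightarrow> ('a \<times> real) set" where
  "sendo u = endo u \<inter> (level u 0 \<times> {0..1})"

definition d_E :: "('a::metric_space \<Rightarrow> real) \<Rightarrow> ('a \<Rightarrow> real) \<Rightarrow> real" where
  "d_E u v = hdist dbar (endo u) (endo v)"

definition d_S :: "('a::metric_space \<Rightarrow> real) \<Rightarrow> ('a \<Rightarrow> real) \<Rightarrow> real" where
  "d_S u v = hdist dbar (sendo u) (sendo v)"

end

(*
  A fuzzy set is determined by its level sets, and the Zadeh extension acts levelwise: the
  \<alpha>-level of zadeh f u is the image under f of the \<alpha>-level of u.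

  From fuzzy to crisp: feed the specification property of zadeh f with indicator functions of
  compact sets. For each of d_inf, d_0, d_S and d_E, a fuzzy set within \<delta> \<le> 1/4 of an
  indicator function has its 1/2-level within \<delta> of the compact set in both directions, so the
  1/2-level of the periodic tracing fuzzy set is a periodic compact set tracing for fbar f.

  From crisp to fuzzy: by compactness of [0,1] and upper semicontinuity, finitely many levels
  \<beta> \<in> S approximate every level of each of the finitely many fuzzy sets (zadeh f ^^ k) (u r)
  that have to be traced. Specification for fbar f, applied to the \<beta>-levels of the u r, gives
  periodic compact sets P \<beta>, and the fuzzy set x \<mapsto> max {\<beta> \<in> S. x \<in> P \<beta>} is periodic and
  traces the u r in d_inf. Finally d_0, d_S and d_E are bounded by d_inf.
*)
theory Submission
  imports Defs
begin

subsection \<open>Level sets\<close>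

lemma usc_iff_closed_superlevels: "usc u \<longleftrightarrow> (\<forall>a. closed {x. a \<le> u x})"
  unfolding usc_def closed_def by (simp add: Collect_neg_eq[symmetric] not_le)

lemma usc_less_bound_on_compact:
  assumes "compact K" "usc u" "\<forall>y\<in>K. u y < \<alpha>"
  shows "\<exists>c<\<alpha>. \<forall>y\<in>K. u y < c"
proof -
  have "K \<subseteq> (\<Union>c\<in>{..<\<alpha>}. {x. u x < c})"
  proof
    fix y assume "y \<in> K"
    then have "u y < (u y + \<alpha>) / 2" "(u y + \<alpha>) / 2 < \<alpha>" using assms(3) by auto
    then show "y \<in> (\<Union>c\<in>{..<\<alpha>}. {x. u x < c})" by blast
  qed
  then obtain C where C: "C \<subseteq> {..<\<alpha>}" "finite C" "K \<subseteq> (\<Union>c\<in>C. {x. u x < c})"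
    using compactE_image[OF assms(1)] assms(2) unfolding usc_def by metis
  show ?thesis
  proof (intro exI conjI ballI)
    show "Max (insert (\<alpha> - 1) C) < \<alpha>" using C(1,2) by auto
    fix y assume "y \<in> K"
    then obtain c where "c \<in> C" "u y < c" using C(3) by blast
    then show "u y < Max (insert (\<alpha> - 1) C)"
      using C(2) by (meson Max_ge finite_insert insertCI less_le_trans)
  qed
qed

lemma FspaceD:
  assumes "u \<in> Fspace"
  shows "\<And>x. 0 \<le> u x" "\<And>x. u x \<le> 1" "usc u" "compact (level u 0)" "level u 1 \<noteq> {}"
  using assms by (auto simp: Fspace_def)

lemma level_subset_level_0: "0 \<le> \<alpha> \<Longrightarrow> level u \<alpha> \<subseteq> level u 0"
  using closure_subset[of "{x. 0 < u x}"] by (cases "\<alpha> = 0") (auto simp: level_def)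

lemma level_antimono: "0 \<le> \<alpha> \<Longrightarrow> \<alpha> \<le> \<beta> \<Longrightarrow> level u \<beta> \<subseteq> level u \<alpha>"
  using level_subset_level_0[of \<beta> u] by (cases "\<alpha> = 0") (auto simp: level_def)

lemma compact_level:
  assumes "u \<in> Fspace" "0 \<le> \<alpha>"
  shows "compact (level u \<alpha>)"
proof (cases "\<alpha> = 0")
  case False
  then have "level u \<alpha> = level u 0 \<inter> {x. \<alpha> \<le> u x}"
    using level_subset_level_0[OF assms(2)] by (auto simp: level_def)
  then show ?thesis
    using FspaceD(3,4)[OF assms(1)] by (simp add: compact_Int_closed usc_iff_closed_superlevels)
qed (use FspaceD(4)[OF assms(1)] in simp)

lemma level_nonempty: "u \<in> Fspace \<Longrightarrow> 0 \<le> \<alpha> \<Longrightarrow> \<alpha> \<le> 1 \<Longrightarrow> level u \<alpha> \<noteq> {}"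
  using level_antimono[of \<alpha> 1 u] FspaceD(5) by blast

lemma Fspace_eqI:
  assumes "u \<in> Fspace" "v \<in> Fspace" "\<And>\<alpha>. 0 < \<alpha> \<Longrightarrow> level u \<alpha> = level v \<alpha>"
  shows "u = v"
proof -
  have le: "p x \<le> q x"
    if "q \<in> Fspace" "\<And>\<alpha>. 0 < \<alpha> \<Longrightarrow> level p \<alpha> = level q \<alpha>" for p q :: "'a \<Rightarrow> real" and x
  proof (cases "0 < p x")
    case True
    have "x \<in> level p (p x)" using True by (simp add: level_def)
    then have "x \<in> level q (p x)" using that(2)[OF True] by simp
    then show ?thesis using True by (simp add: level_def)
  qed (use FspaceD(1)[OF that(1), of x] in linarith)
  show ?thesis using le[OF assms(2,3)] le[OF assms(1)] assms(3) by (intro ext antisym) auto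
qed

lemma level_indicator_pos: "0 < \<alpha> \<Longrightarrow> level (indicator K) \<alpha> = (if \<alpha> \<le> 1 then K else {})"
  by (auto simp: level_def indicator_def)

lemma level_indicator:
  assumes "closed K" "0 \<le> \<alpha>" "\<alpha> \<le> 1"
  shows "level (indicator K) \<alpha> = K"
proof (cases "\<alpha> = 0")
  case True
  have "{x. 0 < (indicator K x :: real)} = K" by (auto simp: indicator_def)
  then show ?thesis using True assms(1) by (simp add: level_def)
qed (use assms level_indicator_pos[of \<alpha> K] in auto)

lemma indicator_in_Fspace:
  assumes "K \<in> Kspace"
  shows "(indicator K :: 'a::metric_space \<Rightarrow> real) \<in> Fspace"
proof -
  have K: "compact K" "K \<noteq> {}" using assms by (auto simp: Kspace_def)
  have "{x. a \<le> (indicator K x :: real)} = (if a \<le> 0 then UNIV else if a \<le> 1 then K else {})" for a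
    by (auto simp: indicator_def)
  then have "usc (indicator K :: 'a \<Rightarrow> real)"
    using compact_imp_closed[OF K(1)] by (simp add: usc_iff_closed_superlevels)
  then show ?thesis
    using level_indicator[OF compact_imp_closed[OF K(1)]] K by (auto simp: Fspace_def indicator_def)
qed

subsection \<open>Hausdorff distance\<close>

definition hclose :: "('b \<Rightarrow> 'b \<Rightarrow> real) \<Rightarrow> real \<Rightarrow> 'b set \<Rightarrow> 'b set \<Rightarrow> bool" where
  "hclose \<rho> \<delta> A B \<longleftrightarrow> (\<forall>a\<in>A. \<exists>b\<in>B. \<rho> a b < \<delta>) \<and> (\<forall>b\<in>B. \<exists>a\<in>A. \<rho> a b < \<delta>)"

lemma INF_le_of_nonneg:
  fixes \<rho> :: "'c \<Rightarrow> real"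
  assumes "\<And>b. 0 \<le> \<rho> b" "b \<in> B" "\<rho> b \<le> c"
  shows "(INF b\<in>B. \<rho> b) \<le> c"
  using assms by (meson bdd_belowI2 cINF_lower2)

lemma SUP_INF_le:
  fixes \<rho> :: "'b \<Rightarrow> 'c \<Rightarrow> real"
  assumes "A \<noteq> {}" "\<And>a b. 0 \<le> \<rho> a b" "\<forall>a\<in>A. \<exists>b\<in>B. \<rho> a b \<le> c"
  shows "(SUP a\<in>A. INF b\<in>B. \<rho> a b) \<le> c"
proof (rule cSUP_least[OF assms(1)])
  fix a assume "a \<in> A"
  then obtain b where "b \<in> B" "\<rho> a b \<le> c" using assms(3) by blast
  then show "(INF b\<in>B. \<rho> a b) \<le> c" using INF_le_of_nonneg[of "\<rho> a", OF assms(2)] by blast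
qed

lemma less_of_SUP_INF_less:
  fixes \<rho> :: "'b \<Rightarrow> 'c \<Rightarrow> real"
  assumes "a \<in> A" "B \<noteq> {}" "\<And>a b. 0 \<le> \<rho> a b" "\<forall>a\<in>A. \<exists>b\<in>B. \<rho> a b \<le> C"
    and "(SUP a\<in>A. INF b\<in>B. \<rho> a b) < \<delta>"
  shows "\<exists>b\<in>B. \<rho> a b < \<delta>"
proof -
  have "bdd_above ((\<lambda>a. INF b\<in>B. \<rho> a b) ` A)"
    using assms(3,4) INF_le_of_nonneg[of "\<rho> _"] by (metis (no_types, lifting) bdd_aboveI2)
  then have "(INF b\<in>B. \<rho> a b) < \<delta>" using cSUP_upper[OF assms(1)] assms(5) by (meson le_less_trans)
  then show ?thesis using cInf_lessD[of "\<rho> a ` B"] assms(2) by auto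
qed

lemma hdist_leI:
  assumes "A \<noteq> {}" "B \<noteq> {}" "\<And>a b. 0 \<le> \<rho> a b"
    and "\<forall>a\<in>A. \<exists>b\<in>B. \<rho> a b \<le> c" "\<forall>b\<in>B. \<exists>a\<in>A. \<rho> a b \<le> c"
  shows "hdist \<rho> A B \<le> c"
  using SUP_INF_le[of A \<rho>, OF assms(1,3,4)] SUP_INF_le[of B "\<lambda>b a. \<rho> a b", OF assms(2,3,5)]
  by (simp add: hdist_def)

lemma hclose_imp_hdist_le:
  "A \<noteq> {} \<Longrightarrow> B \<noteq> {} \<Longrightarrow> (\<And>a b. 0 \<le> \<rho> a b) \<Longrightarrow> hclose \<rho> \<delta> A B \<Longrightarrow> hdist \<rho> A B \<le> \<delta>"
  unfolding hclose_def by (rule hdist_leI) (meson less_imp_le)+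

lemma hdist_less_imp_hclose:
  assumes "A \<noteq> {}" "B \<noteq> {}" "\<And>a b. 0 \<le> \<rho> a b"
    and "\<forall>a\<in>A. \<exists>b\<in>B. \<rho> a b \<le> C" "\<forall>b\<in>B. \<exists>a\<in>A. \<rho> a b \<le> D"
    and "hdist \<rho> A B < \<delta>"
  shows "hclose \<rho> \<delta> A B"
  using less_of_SUP_INF_less[of _ A B \<rho>, OF _ assms(2,3,4)]
    less_of_SUP_INF_less[of _ B A "\<lambda>b a. \<rho> a b", OF _ assms(1,3,5)] assms(6)
  by (auto simp: hclose_def hdist_def)

lemma dH_less_imp_hclose:
  assumes "compact A" "compact B" "A \<noteq> {}" "B \<noteq> {}" "dH A B < \<delta>"
  shows "hclose dist \<delta> A B"
proof -
  have "bounded (A \<union> B)" using assms(1,2) by (simp add: compact_imp_bounded)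
  then have "dist a b \<le> diameter (A \<union> B)" if "a \<in> A" "b \<in> B" for a b
    using that by (auto intro: diameter_bounded_bound)
  then show ?thesis
    using assms(3-5) unfolding dH_def
    by (intro hdist_less_imp_hclose[where C = "diameter (A \<union> B)" and D = "diameter (A \<union> B)"])
      (auto simp: ex_in_conv[symmetric])
qed

subsection \<open>The metrics d_inf and d_0\<close>

lemma dH_commute: "dH A B = dH B A"
  by (simp add: dH_def hdist_def dist_commute max.commute)

lemma d_inf_commute: "d_inf u v = d_inf v u"
  by (simp add: d_inf_def dH_commute)

lemma dH_level_le_d_inf:
  assumes "u \<in> Fspace" "v \<in> Fspace" "\<alpha> \<in> {0..1}"
  shows "dH (level u \<alpha>) (level v \<alpha>) \<le> d_inf u v"
proof -
  let ?D = "diameter (level u 0 \<union> level v 0)"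
  have bounded: "bounded (level u 0 \<union> level v 0)"
    using compact_level[OF assms(1)] compact_level[OF assms(2)] by (simp add: compact_imp_bounded)
  have "dH (level u \<beta>) (level v \<beta>) \<le> ?D" if "\<beta> \<in> {0..1}" for \<beta>
  proof -
    have "dist a b \<le> ?D" if "a \<in> level u \<beta>" "b \<in> level v \<beta>" for a b
      using diameter_bounded_bound[OF bounded] level_subset_level_0 \<open>\<beta> \<in> {0..1}\<close> that by fastforce
    then show ?thesis
      using level_nonempty[OF assms(1)] level_nonempty[OF assms(2)] that unfolding dH_def
      by (intro hdist_leI) (auto simp: ex_in_conv[symmetric])
  qed
  then have "bdd_above ((\<lambda>\<beta>. dH (level u \<beta>) (level v \<beta>)) ` {0..1})" by (intro bdd_aboveI2)
  then show ?thesis unfolding d_inf_def using assms(3) by (rule cSUP_upper[rotated])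
qed

lemma d_inf_leI: "(\<And>\<alpha>. \<alpha> \<in> {0..1} \<Longrightarrow> dH (level u \<alpha>) (level v \<alpha>) \<le> c) \<Longrightarrow> d_inf u v \<le> c"
  unfolding d_inf_def by (rule cSUP_least) auto

lemma d_inf_less_imp_hclose:
  assumes "u \<in> Fspace" "v \<in> Fspace" "\<alpha> \<in> {0..1}" "d_inf u v < \<delta>"
  shows "hclose dist \<delta> (level u \<alpha>) (level v \<alpha>)"
  using assms dH_level_le_d_inf[OF assms(1-3)]
  by (intro dH_less_imp_hclose) (auto simp: compact_level level_nonempty)

lemma d_inf_nonneg:
  assumes "u \<in> Fspace" "v \<in> Fspace"
  shows "0 \<le> d_inf u v"
proof (rule ccontr)
  assume "\<not> 0 \<le> d_inf u v"
  then have "hclose dist 0 (level u 0) (level v 0)" using d_inf_less_imp_hclose[OF assms, of 0 0] by simp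
  then show False using level_nonempty[OF assms(1), of 0] by (force simp: hclose_def)
qed

lemma id_in_Tset: "(\<lambda>x. x) \<in> Tset"
  unfolding Tset_def using homeomorphism_ident by (auto simp: strict_mono_on_def)

lemma Tset_fixes_ends:
  assumes "\<xi> \<in> Tset"
  shows "\<xi> 0 = 0" "\<xi> 1 = 1"
proof -
  obtain \<eta> where "homeomorphism {0..1} {0..1} \<xi> \<eta>" and mono: "strict_mono_on {0..1} \<xi>"
    using assms by (auto simp: Tset_def)
  then have onto: "\<xi> ` {0..1} = {0..1::real}" by (simp add: homeomorphism_def)
  then have "0 \<in> \<xi> ` {0..1}" "1 \<in> \<xi> ` {0..1}" by auto
  then obtain a b where a: "a \<in> {0..1}" "\<xi> a = 0" and b: "b \<in> {0..1}" "\<xi> b = 1" by (metis imageE)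
  have "\<xi> 0 \<in> {0..1}" "\<xi> 1 \<in> {0..1}" using onto by auto
  moreover have "a \<noteq> 0 \<Longrightarrow> \<xi> 0 < \<xi> a" "b \<noteq> 1 \<Longrightarrow> \<xi> b < \<xi> 1"
    using strict_mono_onD[OF mono] a(1) b(1) by auto
  ultimately show "\<xi> 0 = 0" "\<xi> 1 = 1" using a(2) b(2) by force+
qed

lemma d_0_le_d_inf:
  assumes "u \<in> Fspace" "v \<in> Fspace"
  shows "d_0 u v \<le> d_inf u v"
proof (rule dense_ge)
  fix c assume c: "d_inf u v < c"
  then have "0 < c" using d_inf_nonneg[OF assms] by linarith
  then have "c \<in> {\<epsilon>. 0 < \<epsilon> \<and> (\<exists>\<xi>\<in>Tset. (\<forall>\<alpha>\<in>{0..1}. \<bar>\<xi> \<alpha> - \<alpha>\<bar> \<le> \<epsilon>) \<and> d_inf u (\<xi> \<circ> v) \<le> \<epsilon>)}"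
    using c id_in_Tset by (auto intro!: bexI[of _ "\<lambda>x. x"] simp: o_def)
  then show "d_0 u v \<le> c" unfolding d_0_def by (rule cInf_lower) (auto intro!: bdd_belowI[of _ 0])
qed

lemma d_inf_indicator_le_d_0: "d_inf u (indicator K) \<le> d_0 u (indicator K)"
proof -
  let ?c = "\<bar>d_inf u (indicator K)\<bar> + 1"
  have fixed: "\<xi> \<circ> indicator K = indicator K" if "\<xi> \<in> Tset" for \<xi>
    using Tset_fixes_ends[OF that] by (auto simp: indicator_def)
  have "?c \<in> {\<epsilon>. 0 < \<epsilon> \<and> (\<exists>\<xi>\<in>Tset.
      (\<forall>\<alpha>\<in>{0..1}. \<bar>\<xi> \<alpha> - \<alpha>\<bar> \<le> \<epsilon>) \<and> d_inf u (\<xi> \<circ> indicator K) \<le> \<epsilon>)}"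
    using id_in_Tset by (auto intro!: bexI[of _ "\<lambda>x. x"] simp: o_def)
  then show ?thesis unfolding d_0_def using fixed by (intro cInf_greatest) auto
qed

subsection \<open>Endographs and sendographs\<close>

lemma dbar_nonneg: "0 \<le> dbar p q"
  by (simp add: dbar_def)

lemma dbar_commute: "dbar p q = dbar q p"
  by (simp add: dbar_def dist_commute abs_minus_commute)

lemma mem_sendo_iff:
  assumes "u \<in> Fspace"
  shows "(x, \<alpha>) \<in> sendo u \<longleftrightarrow> \<alpha> \<in> {0..1} \<and> x \<in> level u \<alpha>"
  using FspaceD(1)[OF assms] level_subset_level_0[of \<alpha> u]
  by (cases "\<alpha> = 0") (auto simp: sendo_def endo_def level_def)

lemma mem_endo_iff_pos: "0 < \<alpha> \<Longrightarrow> (x, \<alpha>) \<in> endo u \<longleftrightarrow> \<alpha> \<le> 1 \<and> x \<in> level u \<alpha>"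
  by (auto simp: endo_def level_def)

lemma sendo_nonempty: "u \<in> Fspace \<Longrightarrow> sendo u \<noteq> {}"
  using FspaceD(5) mem_sendo_iff by fastforce

lemma sendo_subset_endo: "sendo u \<subseteq> endo u"
  by (simp add: sendo_def)

lemma sendo_dbar_bound:
  assumes "u \<in> Fspace" "v \<in> Fspace"
  shows "\<forall>a\<in>sendo u. \<exists>b\<in>sendo v. dbar a b \<le> max (diameter (level u 0 \<union> level v 0)) 1"
proof
  fix a assume "a \<in> sendo u"
  then obtain x \<alpha> where a: "a = (x, \<alpha>)" "\<alpha> \<in> {0..1}" "x \<in> level u 0"
    by (auto simp: sendo_def)
  obtain y where y: "y \<in> level v 1" using FspaceD(5)[OF assms(2)] by blast
  have "bounded (level u 0 \<union> level v 0)"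
    using compact_level[OF assms(1)] compact_level[OF assms(2)] by (simp add: compact_imp_bounded)
  then have "dist x y \<le> diameter (level u 0 \<union> level v 0)"
    using a(3) y level_subset_level_0[of 1 v] by (auto intro!: diameter_bounded_bound)
  moreover have "(y, 1) \<in> sendo v" using y mem_sendo_iff[OF assms(2)] by simp
  ultimately show "\<exists>b\<in>sendo v. dbar a b \<le> max (diameter (level u 0 \<union> level v 0)) 1"
    using a(1,2) by (auto simp: dbar_def intro!: bexI[of _ "(y, 1)"])
qed

lemma endo_dbar_bound:
  assumes "u \<in> Fspace" "v \<in> Fspace"
  shows "\<forall>a\<in>endo u. \<exists>b\<in>endo v. dbar a b \<le> max (diameter (level u 0 \<union> level v 0)) 1"
proof
  fix a assume a: "a \<in> endo u"
  obtain x \<alpha> where x: "a = (x, \<alpha>)" by fastforce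
  show "\<exists>b\<in>endo v. dbar a b \<le> max (diameter (level u 0 \<union> level v 0)) 1"
  proof (cases "\<alpha> = 0")
    case True
    then have "a \<in> endo v" using x FspaceD(1)[OF assms(2)] by (simp add: endo_def)
    then show ?thesis by (auto simp: dbar_def intro!: bexI[of _ a])
  next
    case False
    then have "a \<in> sendo u" using a x mem_sendo_iff[OF assms(1)] by (auto simp: endo_def level_def)
    then show ?thesis using sendo_dbar_bound[OF assms] sendo_subset_endo by blast
  qed
qed

lemma d_S_less_imp_hclose:
  assumes "u \<in> Fspace" "v \<in> Fspace" "d_S u v < \<delta>"
  shows "hclose dbar \<delta> (sendo u) (sendo v)"
  using assms sendo_dbar_bound[OF assms(1,2)] sendo_dbar_bound[OF assms(2,1)] unfolding d_S_def
  by (intro hdist_less_imp_hclose) (auto simp: sendo_nonempty dbar_nonneg dbar_commute)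

lemma d_E_less_imp_hclose:
  assumes "u \<in> Fspace" "v \<in> Fspace" "d_E u v < \<delta>"
  shows "hclose dbar \<delta> (endo u) (endo v)"
  using assms endo_dbar_bound[OF assms(1,2)] endo_dbar_bound[OF assms(2,1)] unfolding d_E_def
  by (intro hdist_less_imp_hclose)
    (auto simp: dbar_nonneg dbar_commute dest!: sendo_nonempty dest: sendo_subset_endo[THEN subsetD])

lemma d_inf_less_imp_hclose_sendo:
  assumes "u \<in> Fspace" "v \<in> Fspace" "d_inf u v < c"
  shows "hclose dbar c (sendo u) (sendo v)"
proof -
  have "\<exists>b\<in>sendo v. dbar a b < c"
    if u: "u \<in> Fspace" and v: "v \<in> Fspace" and lt: "d_inf u v < c" and a: "a \<in> sendo u"
    for u v :: "'a \<Rightarrow> real" and a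
  proof -
    obtain x \<alpha> where x: "a = (x, \<alpha>)" "\<alpha> \<in> {0..1}" "x \<in> level u \<alpha>"
      using a mem_sendo_iff[OF u] by (cases a) auto
    then obtain y where y: "y \<in> level v \<alpha>" "dist x y < c"
      using d_inf_less_imp_hclose[OF u v x(2) lt] by (auto simp: hclose_def)
    moreover have "0 < c" using y(2) zero_le_dist[of x y] by linarith
    ultimately show ?thesis
      using x mem_sendo_iff[OF v] by (auto simp: dbar_def intro!: bexI[of _ "(y, \<alpha>)"])
  qed
  from this[OF assms] this[OF assms(2,1)] show ?thesis
    using assms(3) by (auto simp: hclose_def d_inf_commute dbar_commute)
qed

lemma d_inf_less_imp_hclose_endo:
  assumes "u \<in> Fspace" "v \<in> Fspace" "d_inf u v < c"
  shows "hclose dbar c (endo u) (endo v)"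
proof -
  have "\<exists>b\<in>endo v. dbar a b < c"
    if u: "u \<in> Fspace" and v: "v \<in> Fspace" and lt: "d_inf u v < c" and a: "a \<in> endo u"
    for u v :: "'a \<Rightarrow> real" and a
  proof -
    obtain x \<alpha> where x: "a = (x, \<alpha>)" by fastforce
    show ?thesis
    proof (cases "\<alpha> = 0")
      case True
      then have "a \<in> endo v" using x FspaceD(1)[OF v] by (simp add: endo_def)
      moreover have "0 < c" using d_inf_nonneg[OF u v] lt by linarith
      ultimately show ?thesis by (auto simp: dbar_def intro!: bexI[of _ a])
    next
      case False
      then have "a \<in> sendo u" using a x mem_sendo_iff[OF u] by (auto simp: endo_def level_def)
      then show ?thesis
        using d_inf_less_imp_hclose_sendo[OF u v lt] sendo_subset_endo by (fastforce simp: hclose_def)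
    qed
  qed
  from this[OF assms] this[OF assms(2,1)] show ?thesis
    using assms(3) by (auto simp: hclose_def d_inf_commute dbar_commute)
qed

lemma d_S_le_d_inf:
  assumes "u \<in> Fspace" "v \<in> Fspace"
  shows "d_S u v \<le> d_inf u v"
proof (rule dense_ge)
  fix c assume "d_inf u v < c"
  then show "d_S u v \<le> c" unfolding d_S_def
    using d_inf_less_imp_hclose_sendo[OF assms] sendo_nonempty assms
    by (intro hclose_imp_hdist_le) (auto simp: dbar_nonneg)
qed

lemma d_E_le_d_inf:
  assumes "u \<in> Fspace" "v \<in> Fspace"
  shows "d_E u v \<le> d_inf u v"
proof (rule dense_ge)
  fix c assume "d_inf u v < c"
  moreover have "endo u \<noteq> {}" "endo v \<noteq> {}"
    using sendo_nonempty sendo_subset_endo assms by blast+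
  ultimately show "d_E u v \<le> c" unfolding d_E_def
    using d_inf_less_imp_hclose_endo[OF assms] by (intro hclose_imp_hdist_le) (auto simp: dbar_nonneg)
qed

subsection \<open>Fuzzy sets close to a crisp compact set\<close>

(* A may be the sendograph or the endograph of u, and B that of indicator K, so this serves both
   d_S and d_E. The bound \<delta> \<le> 1/4 keeps the level coordinate of a point matched to level 1/2
   positive, and that of a point matched to level 1 above 1/2. *)
lemma hclose_level_half_indicator:
  assumes "u \<in> Fspace" "K \<in> Kspace" "\<delta> \<le> 1/4"
    and "sendo u \<subseteq> A" "A \<subseteq> endo u" "sendo (indicator K) \<subseteq> B" "B \<subseteq> endo (indicator K)"
    and "hclose dbar \<delta> A B"
  shows "hclose dist \<delta> (level u (1/2)) K"
  unfolding hclose_def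
proof (intro conjI ballI)
  fix x assume "x \<in> level u (1/2)"
  then have "(x, 1/2) \<in> A" using assms(4) mem_sendo_iff[OF assms(1)] by auto
  then obtain y \<beta> where y: "(y, \<beta>) \<in> B" "dbar (x, 1/2) (y, \<beta>) < \<delta>"
    using assms(8) unfolding hclose_def by fast
  then have "dist x y < \<delta>" "0 < \<beta>" using assms(3) by (auto simp: dbar_def)
  then have "y \<in> K"
    using y(1) assms(7) by (auto simp: mem_endo_iff_pos level_indicator_pos split: if_splits)
  then show "\<exists>b\<in>K. dist x b < \<delta>" using \<open>dist x y < \<delta>\<close> by blast
next
  fix y assume "y \<in> K"
  then have "(y, 1) \<in> sendo (indicator K)"
    using mem_sendo_iff[OF indicator_in_Fspace[OF assms(2)]] level_indicator_pos[of 1 K] by simp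
  then have "(y, 1) \<in> B" using assms(6) by blast
  then obtain x \<beta> where x: "(x, \<beta>) \<in> A" "dbar (x, \<beta>) (y, 1) < \<delta>"
    using assms(8) unfolding hclose_def by fast
  then have "dist x y < \<delta>" "1/2 \<le> \<beta>" using assms(3) by (auto simp: dbar_def)
  then have "x \<in> level u \<beta>" using x(1) assms(5) mem_endo_iff_pos[of \<beta>] by auto
  then have "x \<in> level u (1/2)" using level_antimono[of "1/2" \<beta> u] \<open>1/2 \<le> \<beta>\<close> by auto
  then show "\<exists>a\<in>level u (1/2). dist a y < \<delta>" using \<open>dist x y < \<delta>\<close> by blast
qed

lemma d_inf_indicator_hclose:
  assumes "u \<in> Fspace" "K \<in> Kspace" "d_inf u (indicator K) < \<delta>"
  shows "hclose dist \<delta> (level u (1/2)) K"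
  using d_inf_less_imp_hclose[OF assms(1) indicator_in_Fspace[OF assms(2)] _ assms(3), of "1/2"]
    level_indicator[of K "1/2"] assms(2) by (simp add: Kspace_def compact_imp_closed)

lemma d_0_indicator_hclose:
  assumes "u \<in> Fspace" "K \<in> Kspace" "d_0 u (indicator K) < \<delta>"
  shows "hclose dist \<delta> (level u (1/2)) K"
  by (rule d_inf_indicator_hclose[OF assms(1,2)]) (use d_inf_indicator_le_d_0[of u K] assms(3) in linarith)

lemma d_S_indicator_hclose:
  assumes "u \<in> Fspace" "K \<in> Kspace" "\<delta> \<le> 1/4" "d_S u (indicator K) < \<delta>"
  shows "hclose dist \<delta> (level u (1/2)) K"
  using d_S_less_imp_hclose[OF assms(1) indicator_in_Fspace[OF assms(2)] assms(4)]
  by (rule hclose_level_half_indicator[OF assms(1-3) order_refl sendo_subset_endo order_refl sendo_subset_endo])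

lemma d_E_indicator_hclose:
  assumes "u \<in> Fspace" "K \<in> Kspace" "\<delta> \<le> 1/4" "d_E u (indicator K) < \<delta>"
  shows "hclose dist \<delta> (level u (1/2)) K"
  using d_E_less_imp_hclose[OF assms(1) indicator_in_Fspace[OF assms(2)] assms(4)]
  by (rule hclose_level_half_indicator[OF assms(1-3) sendo_subset_endo order_refl sendo_subset_endo order_refl])

subsection \<open>Finite nets of levels\<close>

definition level_net :: "('a::metric_space \<Rightarrow> real) \<Rightarrow> real \<Rightarrow> real set \<Rightarrow> real set \<Rightarrow> bool" where
  "level_net v \<epsilon> T S \<longleftrightarrow> (\<forall>\<alpha>\<in>T. \<exists>\<beta>\<in>S. \<alpha> \<le> \<beta> \<and> (\<forall>x\<in>level v \<alpha>. \<exists>y\<in>level v \<beta>. dist x y < \<epsilon>))"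

lemma level_net_mono: "level_net v \<epsilon> T S \<Longrightarrow> T' \<subseteq> T \<Longrightarrow> S \<subseteq> S' \<Longrightarrow> level_net v \<epsilon> T' S'"
  unfolding level_net_def by (meson subsetD)

lemma level_net_Un: "level_net v \<epsilon> T S \<Longrightarrow> level_net v \<epsilon> T' S' \<Longrightarrow> level_net v \<epsilon> (T \<union> T') (S \<union> S')"
  unfolding level_net_def by blast

lemma level_net_UN:
  "(\<And>i. i \<in> I \<Longrightarrow> level_net v \<epsilon> (T i) (S i)) \<Longrightarrow> level_net v \<epsilon> (\<Union>i\<in>I. T i) (\<Union>i\<in>I. S i)"
  unfolding level_net_def by blast

lemma level_net_below:
  assumes "v \<in> Fspace" "0 < \<alpha>" "0 < \<epsilon>"
  shows "\<exists>a\<in>{0..<\<alpha>}. level_net v \<epsilon> {a<..\<alpha>} {\<alpha>}"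
proof -
  define T where "T = (\<Union>y\<in>level v \<alpha>. ball y \<epsilon>)"
  define K where "K = level v (\<alpha>/2) - T"
  have "compact K"
    unfolding K_def T_def using compact_level[OF assms(1)] assms(2) by (intro compact_diff) auto
  moreover have "\<forall>y\<in>K. v y < \<alpha>"
  proof (rule ballI, rule ccontr)
    fix y assume "y \<in> K" "\<not> v y < \<alpha>"
    then have "y \<in> level v \<alpha>" "y \<notin> T" using assms(2) by (auto simp: K_def level_def)
    then show False using assms(3) by (auto simp: T_def)
  qed
  ultimately obtain c where c: "c < \<alpha>" "\<forall>y\<in>K. v y < c"
    using usc_less_bound_on_compact FspaceD(3)[OF assms(1)] by blast
  define a where "a = max c (\<alpha>/2)"
  have "\<exists>y\<in>level v \<alpha>. dist x y < \<epsilon>" if "\<gamma> \<in> {a<..\<alpha>}" "x \<in> level v \<gamma>" for \<gamma> x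
  proof -
    have "a < v x" "0 < \<gamma>" using that assms(2) by (auto simp: a_def level_def)
    then have "x \<in> level v (\<alpha>/2)" "x \<notin> K" using c(2) assms(2) by (auto simp: a_def level_def)
    then have "x \<in> T" by (simp add: K_def)
    then show ?thesis by (auto simp: T_def dist_commute)
  qed
  then have "level_net v \<epsilon> {a<..\<alpha>} {\<alpha>}" by (auto simp: level_net_def)
  moreover have "a \<in> {0..<\<alpha>}" using c(1) assms(2) by (auto simp: a_def)
  ultimately show ?thesis by blast
qed

(* For \<alpha> = 0 the index set also contains 0: level v 0 is the closure of {x. 0 < v x}. *)
lemma level_net_above:
  assumes "v \<in> Fspace" "0 \<le> \<alpha>" "\<alpha> < 1" "0 < \<epsilon>"
  shows "\<exists>b\<in>{\<alpha><..1}. level_net v \<epsilon> {\<gamma>\<in>{0..<b}. \<alpha> < \<gamma> \<or> \<alpha> = 0} {b}"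
proof -
  let ?R = "closure {x. \<alpha> < v x}"
  have "?R \<subseteq> level v 0" using assms(2) by (auto simp: level_def intro!: closure_mono)
  moreover have "compact (level v 0 \<inter> ?R)" using FspaceD(4)[OF assms(1)] by (rule compact_Int_closed) simp
  ultimately have "compact ?R" by (simp add: Int_absorb1)
  moreover have "?R \<subseteq> (\<Union>x\<in>{x. \<alpha> < v x}. ball x \<epsilon>)"
  proof
    fix z assume "z \<in> ?R"
    then have "\<exists>y\<in>{x. \<alpha> < v x}. dist y z < \<epsilon>" using assms(4) unfolding closure_approachable by blast
    then show "z \<in> (\<Union>x\<in>{x. \<alpha> < v x}. ball x \<epsilon>)" by auto
  qed
  ultimately obtain X where X: "X \<subseteq> {x. \<alpha> < v x}" "finite X" "?R \<subseteq> (\<Union>x\<in>X. ball x \<epsilon>)"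
    using compactE_image[of ?R "{x. \<alpha> < v x}" "\<lambda>x. ball x \<epsilon>"] by blast
  define b where "b = Min (insert 1 (v ` X))"
  have b: "b \<in> {\<alpha><..1}" "\<forall>x\<in>X. b \<le> v x"
    using X(1,2) assms(3) by (auto simp: b_def)
  have sub: "level v \<gamma> \<subseteq> ?R" if "\<gamma> \<in> {0..<b}" "\<alpha> < \<gamma> \<or> \<alpha> = 0" for \<gamma>
  proof (cases "\<alpha> < \<gamma>")
    case True
    then have "level v \<gamma> \<subseteq> {x. \<alpha> < v x}" using assms(2) by (auto simp: level_def)
    then show ?thesis using closure_subset by blast
  next
    case False
    then show ?thesis using that level_subset_level_0[of \<gamma> v] by (simp add: level_def)
  qed
  have approx: "\<exists>y\<in>level v b. dist z y < \<epsilon>" if "z \<in> ?R" for z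
  proof -
    obtain x where "x \<in> X" "dist x z < \<epsilon>" using X(3) \<open>z \<in> ?R\<close> by auto
    moreover have "x \<in> level v b" using b \<open>x \<in> X\<close> assms(2) by (auto simp: level_def)
    ultimately show ?thesis by (auto simp: dist_commute)
  qed
  have "level_net v \<epsilon> {\<gamma>\<in>{0..<b}. \<alpha> < \<gamma> \<or> \<alpha> = 0} {b}"
    unfolding level_net_def
  proof
    fix \<gamma> assume "\<gamma> \<in> {\<gamma>\<in>{0..<b}. \<alpha> < \<gamma> \<or> \<alpha> = 0}"
    then have "\<gamma> \<le> b" "\<forall>x\<in>level v \<gamma>. \<exists>y\<in>level v b. dist x y < \<epsilon>"
      using sub approx by auto
    then show "\<exists>\<beta>\<in>{b}. \<gamma> \<le> \<beta> \<and> (\<forall>x\<in>level v \<gamma>. \<exists>y\<in>level v \<beta>. dist x y < \<epsilon>)" by blast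
  qed
  then show ?thesis using b(1) by blast
qed

lemma level_net_local:
  assumes "v \<in> Fspace" "0 < \<epsilon>" "\<alpha> \<in> {0..1}"
  shows "\<exists>U S. open U \<and> \<alpha> \<in> U \<and> finite S \<and> S \<subseteq> {0<..1} \<and> level_net v \<epsilon> (U \<inter> {0..1}) S"
proof -
  consider "\<alpha> = 0" | "0 < \<alpha>" "\<alpha> < 1" | "\<alpha> = 1" using assms(3) by fastforce
  then show ?thesis
  proof cases
    case 1
    obtain b where "b \<in> {0<..1}" "level_net v \<epsilon> {\<gamma>\<in>{0..<b}. 0 < \<gamma> \<or> 0 = (0::real)} {b}"
      using level_net_above[OF assms(1) order_refl zero_less_one assms(2)] by blast
    then show ?thesis
      using 1 by (intro exI[of _ "{..<b}"] exI[of _ "{b}"]) (auto elim!: level_net_mono)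
  next
    case 2
    obtain a where a: "a \<in> {0..<\<alpha>}" "level_net v \<epsilon> {a<..\<alpha>} {\<alpha>}"
      using level_net_below[OF assms(1) 2(1) assms(2)] by blast
    obtain b where "b \<in> {\<alpha><..1}" "level_net v \<epsilon> {\<gamma>\<in>{0..<b}. \<alpha> < \<gamma> \<or> \<alpha> = 0} {b}"
      using level_net_above[OF assms(1) less_imp_le[OF 2(1)] 2(2) assms(2)] by blast
    then have b: "b \<in> {\<alpha><..1}" "level_net v \<epsilon> {\<alpha><..<b} {b}"
      using 2(1) by (auto elim!: level_net_mono)
    have "level_net v \<epsilon> ({a<..<b} \<inter> {0..1}) {\<alpha>, b}"
      using level_net_Un[OF a(2) b(2)] by (rule level_net_mono) auto
    then show ?thesis using a(1) b(1) 2 by (intro exI[of _ "{a<..<b}"] exI[of _ "{\<alpha>, b}"]) auto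
  next
    case 3
    obtain a where a: "a \<in> {0..<1}" "level_net v \<epsilon> {a<..1} {1}"
      using level_net_below[OF assms(1) _ assms(2), of 1] by auto
    then show ?thesis
      using 3 by (intro exI[of _ "{a<..}"] exI[of _ "{1}"]) (auto elim!: level_net_mono)
  qed
qed

lemma finite_level_net:
  assumes "v \<in> Fspace" "0 < \<epsilon>"
  shows "\<exists>S. finite S \<and> S \<subseteq> {0<..1} \<and> level_net v \<epsilon> {0..1} S"
proof -
  have "\<forall>\<alpha>\<in>{0..1}. \<exists>U S. open U \<and> \<alpha> \<in> U \<and> finite S \<and> S \<subseteq> {0<..1} \<and> level_net v \<epsilon> (U \<inter> {0..1}) S"
    using level_net_local[OF assms] by blast
  then have "\<exists>U. \<forall>\<alpha>\<in>{0..1}. \<exists>S. open (U \<alpha>) \<and> \<alpha> \<in> U \<alpha> \<and> finite S \<and> S \<subseteq> {0<..1} \<and>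
      level_net v \<epsilon> (U \<alpha> \<inter> {0..1}) S"
    by (rule bchoice)
  then obtain U where "\<forall>\<alpha>\<in>{0..1}. \<exists>S. open (U \<alpha>) \<and> \<alpha> \<in> U \<alpha> \<and> finite S \<and> S \<subseteq> {0<..1} \<and>
      level_net v \<epsilon> (U \<alpha> \<inter> {0..1}) S"
    by blast
  then have "\<exists>S. \<forall>\<alpha>\<in>{0..1}. open (U \<alpha>) \<and> \<alpha> \<in> U \<alpha> \<and> finite (S \<alpha>) \<and> S \<alpha> \<subseteq> {0<..1} \<and>
      level_net v \<epsilon> (U \<alpha> \<inter> {0..1}) (S \<alpha>)"
    by (rule bchoice)
  then obtain S where US: "\<forall>\<alpha>\<in>{0..1}. open (U \<alpha>) \<and> \<alpha> \<in> U \<alpha> \<and> finite (S \<alpha>) \<and> S \<alpha> \<subseteq> {0<..1} \<and>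
      level_net v \<epsilon> (U \<alpha> \<inter> {0..1}) (S \<alpha>)"
    by blast
  have "{0..1} \<subseteq> (\<Union>\<alpha>\<in>{0..1}. U \<alpha>)" "\<And>\<alpha>. \<alpha> \<in> {0..1} \<Longrightarrow> open (U \<alpha>)" using US by blast+
  then obtain C where C: "C \<subseteq> {0..1}" "finite C" "{0..1} \<subseteq> (\<Union>\<alpha>\<in>C. U \<alpha>)"
    using compactE_image[OF compact_Icc, where C = "{0..1}" and f = U] by metis
  have "level_net v \<epsilon> (\<Union>\<alpha>\<in>C. U \<alpha> \<inter> {0..1}) (\<Union>\<alpha>\<in>C. S \<alpha>)"
    using US C(1) by (intro level_net_UN) blast
  then have "level_net v \<epsilon> {0..1} (\<Union>\<alpha>\<in>C. S \<alpha>)" by (rule level_net_mono) (use C(3) in auto)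
  moreover have "finite (\<Union>\<alpha>\<in>C. S \<alpha>)" "(\<Union>\<alpha>\<in>C. S \<alpha>) \<subseteq> {0<..1}" using US C(1,2) by blast+
  ultimately show ?thesis by blast
qed

lemma finite_common_level_net:
  assumes "finite V" "V \<subseteq> Fspace" "0 < \<epsilon>"
  shows "\<exists>S. finite S \<and> S \<subseteq> {0<..1} \<and> 1 \<in> S \<and> (\<forall>v\<in>V. level_net v \<epsilon> {0..1} S)"
proof -
  obtain S where S: "\<And>v. v \<in> V \<Longrightarrow> finite (S v) \<and> S v \<subseteq> {0<..1} \<and> level_net v \<epsilon> {0..1} (S v)"
    using finite_level_net assms(2,3) by (metis subsetD)
  then have "\<forall>v\<in>V. level_net v \<epsilon> {0..1} (insert 1 (\<Union>v\<in>V. S v))"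
    by (blast intro: level_net_mono)
  moreover have "finite (insert 1 (\<Union>v\<in>V. S v))" "insert 1 (\<Union>v\<in>V. S v) \<subseteq> {0<..1}"
    using S assms(1) by auto
  ultimately show ?thesis by blast
qed

subsection \<open>Fuzzy sets stacked from finitely many compact sets\<close>

definition fuzzy_stack :: "real set \<Rightarrow> (real \<Rightarrow> 'a set) \<Rightarrow> 'a \<Rightarrow> real" where
  "fuzzy_stack S P x = Max (insert 0 {\<beta>\<in>S. x \<in> P \<beta>})"

lemma fuzzy_stack_cong: "(\<And>\<beta>. \<beta> \<in> S \<Longrightarrow> P \<beta> = Q \<beta>) \<Longrightarrow> fuzzy_stack S P = fuzzy_stack S Q"
  unfolding fuzzy_stack_def by (intro ext arg_cong[where f = "\<lambda>A. Max (insert 0 A)"]) auto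

lemma level_fuzzy_stack:
  fixes P :: "real \<Rightarrow> 'a::metric_space set"
  assumes "finite S" "S \<subseteq> {0<..1}" "\<forall>\<beta>\<in>S. compact (P \<beta>)" "0 \<le> \<alpha>"
  shows "level (fuzzy_stack S P) \<alpha> = (\<Union>\<beta>\<in>{\<beta>\<in>S. \<alpha> \<le> \<beta>}. P \<beta>)"
proof (cases "\<alpha> = 0")
  case True
  have "{x. 0 < fuzzy_stack S P x} = (\<Union>\<beta>\<in>S. P \<beta>)"
    using assms(1,2) by (auto simp: fuzzy_stack_def Max_gr_iff subset_iff)
  moreover have "compact (\<Union>\<beta>\<in>S. P \<beta>)" using assms(1,3) by (intro compact_UN) auto
  then have "closed (\<Union>\<beta>\<in>S. P \<beta>)" by (rule compact_imp_closed)
  moreover have "{\<beta>\<in>S. 0 \<le> \<beta>} = S" using assms(2) by auto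
  ultimately show ?thesis using True by (simp add: level_def)
next
  case False
  then show ?thesis using assms(1,4) by (auto simp: level_def fuzzy_stack_def Max_ge_iff)
qed

lemma fuzzy_stack_in_Fspace:
  assumes "finite S" "S \<subseteq> {0<..1}" "1 \<in> S" "\<forall>\<beta>\<in>S. P \<beta> \<in> Kspace"
  shows "fuzzy_stack S P \<in> Fspace"
proof -
  have compact: "\<forall>\<beta>\<in>S. compact (P \<beta>)" using assms(4) by (simp add: Kspace_def)
  have bounds: "0 \<le> fuzzy_stack S P x" "fuzzy_stack S P x \<le> 1" for x
    using assms(1,2) by (auto simp: fuzzy_stack_def Max_ge_iff)
  have "closed {x. a \<le> fuzzy_stack S P x}" for a
  proof (cases "0 < a")
    case True
    then have "{x. a \<le> fuzzy_stack S P x} = level (fuzzy_stack S P) a" by (simp add: level_def)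
    then show ?thesis
      using level_fuzzy_stack[OF assms(1,2) compact] True assms(1) compact
      by (auto intro!: closed_UN compact_imp_closed)
  next
    case False
    then have "a \<le> fuzzy_stack S P x" for x using bounds(1)[of x] by linarith
    then show ?thesis by simp
  qed
  moreover have "compact (level (fuzzy_stack S P) 0)"
    using level_fuzzy_stack[OF assms(1,2) compact] assms(1) compact by (auto intro!: compact_UN)
  moreover have "P 1 \<subseteq> level (fuzzy_stack S P) 1"
    using level_fuzzy_stack[OF assms(1,2) compact, of 1] assms(3) by auto
  then have "level (fuzzy_stack S P) 1 \<noteq> {}" using assms(3,4) by (auto simp: Kspace_def)
  ultimately show ?thesis using bounds by (simp add: Fspace_def usc_iff_closed_superlevels)
qed

lemma d_inf_fuzzy_stack_le:
  assumes "v \<in> Fspace" "finite S" "S \<subseteq> {0<..1}" "1 \<in> S" "\<forall>\<beta>\<in>S. P \<beta> \<in> Kspace"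
    and "\<forall>\<beta>\<in>S. hclose dist \<epsilon> (P \<beta>) (level v \<beta>)" "level_net v \<epsilon> {0..1} S"
  shows "d_inf (fuzzy_stack S P) v \<le> 2 * \<epsilon>"
proof (rule d_inf_leI)
  fix \<alpha> :: real assume \<alpha>: "\<alpha> \<in> {0..1}"
  let ?w = "fuzzy_stack S P"
  have "\<forall>\<beta>\<in>S. compact (P \<beta>)" using assms(5) by (simp add: Kspace_def)
  then have level_w: "level ?w \<alpha> = (\<Union>\<beta>\<in>{\<beta>\<in>S. \<alpha> \<le> \<beta>}. P \<beta>)"
    using \<alpha> by (intro level_fuzzy_stack[OF assms(2,3)]) auto
  show "dH (level ?w \<alpha>) (level v \<alpha>) \<le> 2 * \<epsilon>" unfolding dH_def
  proof (rule hdist_leI)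
    show "level ?w \<alpha> \<noteq> {}" "level v \<alpha> \<noteq> {}"
      using level_nonempty fuzzy_stack_in_Fspace[OF assms(2-5)] assms(1) \<alpha> by auto
    show "\<forall>x\<in>level ?w \<alpha>. \<exists>y\<in>level v \<alpha>. dist x y \<le> 2 * \<epsilon>"
    proof
      fix x assume "x \<in> level ?w \<alpha>"
      then obtain \<beta> where \<beta>: "\<beta> \<in> S" "\<alpha> \<le> \<beta>" "x \<in> P \<beta>" using level_w by auto
      then obtain y where y: "y \<in> level v \<beta>" "dist x y < \<epsilon>" using assms(6) unfolding hclose_def by blast
      moreover have "level v \<beta> \<subseteq> level v \<alpha>" using level_antimono \<alpha> \<beta>(2) by auto
      moreover have "dist x y \<le> 2 * \<epsilon>" using y(2) zero_le_dist[of x y] by linarith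
      ultimately show "\<exists>y\<in>level v \<alpha>. dist x y \<le> 2 * \<epsilon>" by blast
    qed
    show "\<forall>y\<in>level v \<alpha>. \<exists>x\<in>level ?w \<alpha>. dist x y \<le> 2 * \<epsilon>"
    proof
      fix y assume "y \<in> level v \<alpha>"
      then obtain \<beta> z where \<beta>: "\<beta> \<in> S" "\<alpha> \<le> \<beta>" "z \<in> level v \<beta>" "dist y z < \<epsilon>"
        using assms(7) \<alpha> unfolding level_net_def by blast
      then obtain x where x: "x \<in> P \<beta>" "dist x z < \<epsilon>" using assms(6) unfolding hclose_def by blast
      have "dist x y \<le> dist x z + dist y z" by (rule dist_triangle2)
      then have "dist x y \<le> 2 * \<epsilon>" using x(2) \<beta>(4) by linarith
      moreover have "x \<in> level ?w \<alpha>" using level_w x(1) \<beta>(1,2) by auto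
      ultimately show "\<exists>x\<in>level ?w \<alpha>. dist x y \<le> 2 * \<epsilon>" by blast
    qed
  qed simp
qed

subsection \<open>The specification property\<close>

definition spec_admissible ::
    "'b set \<Rightarrow> nat \<Rightarrow> nat \<Rightarrow> (nat \<Rightarrow> 'b) \<Rightarrow> (nat \<Rightarrow> nat) \<Rightarrow> (nat \<Rightarrow> nat) \<Rightarrow> bool" where
  "spec_admissible Y N s y i j \<longleftrightarrow> s \<ge> 2 \<and> (\<forall>r\<in>{1..s}. y r \<in> Y) \<and> i 1 = 0 \<and>
     (\<forall>r\<in>{1..s}. i r \<le> j r) \<and> (\<forall>r\<in>{1..<s}. j r < i (r + 1) \<and> N \<le> i (r + 1) - j r)"

definition spec_traced :: "'b set \<Rightarrow> ('b \<Rightarrow> 'b \<Rightarrow> real) \<Rightarrow> ('b \<Rightarrow> 'b) \<Rightarrow> real \<Rightarrow> nat \<Rightarrow>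
    nat \<Rightarrow> (nat \<Rightarrow> 'b) \<Rightarrow> (nat \<Rightarrow> nat) \<Rightarrow> (nat \<Rightarrow> nat) \<Rightarrow> bool" where
  "spec_traced Y \<rho> g \<epsilon> N s y i j \<longleftrightarrow> (\<exists>x\<in>Y.
     (\<forall>r\<in>{1..s}. \<forall>k\<in>{i r..j r}. \<rho> ((g ^^ k) x) ((g ^^ k) (y r)) < \<epsilon>) \<and> (g ^^ (N + j s)) x = x)"

lemma spec_prop_iff: "spec_prop Y \<rho> g \<longleftrightarrow> (\<forall>\<epsilon>>0. \<exists>N::nat. N \<ge> 1 \<and>
    (\<forall>s y i j. spec_admissible Y N s y i j \<longrightarrow> spec_traced Y \<rho> g \<epsilon> N s y i j))"
  unfolding spec_prop_def spec_admissible_def spec_traced_def by (rule refl)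

lemma spec_prop_dominated:
  assumes "spec_prop Y \<rho> g" "\<forall>a\<in>Y. g a \<in> Y" "\<And>a b. a \<in> Y \<Longrightarrow> b \<in> Y \<Longrightarrow> \<sigma> a b \<le> \<rho> a b"
  shows "spec_prop Y \<sigma> g"
proof -
  have orbit: "(g ^^ k) a \<in> Y" if "a \<in> Y" for a k using that assms(2) by (induction k) auto
  have "spec_traced Y \<sigma> g \<epsilon> N s y i j"
    if adm: "spec_admissible Y N s y i j" and tr: "spec_traced Y \<rho> g \<epsilon> N s y i j" for \<epsilon> N s y i j
  proof -
    obtain x where x: "x \<in> Y" "\<forall>r\<in>{1..s}. \<forall>k\<in>{i r..j r}. \<rho> ((g ^^ k) x) ((g ^^ k) (y r)) < \<epsilon>"
      "(g ^^ (N + j s)) x = x" using tr unfolding spec_traced_def by blast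
    have "\<sigma> ((g ^^ k) x) ((g ^^ k) (y r)) < \<epsilon>" if "r \<in> {1..s}" "k \<in> {i r..j r}" for r k
    proof -
      have "y r \<in> Y" using adm that(1) unfolding spec_admissible_def by blast
      then have "\<sigma> ((g ^^ k) x) ((g ^^ k) (y r)) \<le> \<rho> ((g ^^ k) x) ((g ^^ k) (y r))"
        using assms(3)[OF orbit[OF x(1)] orbit] by blast
      moreover have "\<rho> ((g ^^ k) x) ((g ^^ k) (y r)) < \<epsilon>" using x(2) that by blast
      ultimately show ?thesis by linarith
    qed
    then show ?thesis using x(1,3) unfolding spec_traced_def by blast
  qed
  then show ?thesis using assms(1) unfolding spec_prop_iff by meson
qed

subsection \<open>The Zadeh extension\<close>

lemma zadeh_bounds:
  assumes "u \<in> Fspace"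
  shows "0 \<le> zadeh f u x" "zadeh f u x \<le> 1"
proof -
  have bdd: "bdd_above (u ` (f -` {x}))" using FspaceD(2)[OF assms] by (auto intro!: bdd_aboveI[of _ 1])
  show "0 \<le> zadeh f u x"
  proof (cases "f -` {x} = {}")
    case False
    then obtain y where "y \<in> f -` {x}" by blast
    then have "u y \<le> Sup (u ` (f -` {x}))" using cSup_upper[OF _ bdd] by blast
    then show ?thesis using FspaceD(1)[OF assms, of y] False by (simp add: zadeh_def)
  qed (simp add: zadeh_def)
  have "f -` {x} \<noteq> {} \<Longrightarrow> Sup (u ` (f -` {x})) \<le> 1"
    using FspaceD(2)[OF assms] by (intro cSup_least) auto
  then show "zadeh f u x \<le> 1" by (simp add: zadeh_def)
qed

lemma closure_image_of_compact_closure: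
  fixes f :: "'a::topological_space \<Rightarrow> 'b::t2_space"
  assumes "continuous_on UNIV f" "compact (closure S)"
  shows "closure (f ` S) = f ` closure S"
proof
  show "f ` closure S \<subseteq> closure (f ` S)"
    using continuous_image_closure_subset[OF assms(1) subset_UNIV] .
  have "closed (f ` closure S)"
    using compact_continuous_image[OF continuous_on_subset[OF assms(1)] assms(2)] compact_imp_closed
    by blast
  moreover have "f ` S \<subseteq> f ` closure S" using closure_subset by (rule image_mono)
  ultimately show "closure (f ` S) \<subseteq> f ` closure S" by (simp add: closure_minimal)
qed

lemma fbar_funpow: "(fbar f ^^ k) K = (f ^^ k) ` K"
  by (induction k) (auto simp: fbar_def image_comp)

context
  fixes f :: "'a::metric_space \<Rightarrow> 'a"
  assumes cont_f: "continuous_on UNIV f"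
begin

lemma continuous_on_funpow: "continuous_on UNIV (f ^^ k)"
  by (induction k) (auto intro!: continuous_on_compose2[OF cont_f] continuous_on_id)

lemma Kspace_image_funpow: "K \<in> Kspace \<Longrightarrow> (f ^^ k) ` K \<in> Kspace"
  using compact_continuous_image[OF continuous_on_subset[OF continuous_on_funpow]]
  by (auto simp: Kspace_def)

(* The supremum over a fibre is attained once it is positive: the fibre meets the compact level
   u (\<alpha>/2) in a compact set, on which the upper semicontinuous u stays below some c < \<alpha>. *)
lemma zadeh_ge_iff:
  assumes "u \<in> Fspace" "0 < \<alpha>"
  shows "\<alpha> \<le> zadeh f u x \<longleftrightarrow> (\<exists>y. f y = x \<and> \<alpha> \<le> u y)"
proof
  have bdd: "bdd_above (u ` (f -` {x}))" using FspaceD(2)[OF assms(1)] by (auto intro!: bdd_aboveI[of _ 1])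
  assume "\<exists>y. f y = x \<and> \<alpha> \<le> u y"
  then obtain y where "f y = x" "\<alpha> \<le> u y" by blast
  moreover have "u y \<le> Sup (u ` (f -` {x}))" using cSup_upper[OF _ bdd] \<open>f y = x\<close> by auto
  ultimately show "\<alpha> \<le> zadeh f u x" by (auto simp: zadeh_def)
next
  assume ge: "\<alpha> \<le> zadeh f u x"
  show "\<exists>y. f y = x \<and> \<alpha> \<le> u y"
  proof (rule ccontr)
    assume no_y: "\<not> ?thesis"
    have fiber: "f -` {x} \<noteq> {}" using ge assms(2) by (auto simp: zadeh_def)
    define K where "K = f -` {x} \<inter> level u (\<alpha>/2)"
    have "compact K"
      unfolding K_def using closed_vimage[OF closed_singleton cont_f] compact_level[OF assms(1)] assms(2)
      by (simp add: closed_Int_compact)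
    moreover have "\<forall>y\<in>K. u y < \<alpha>" using no_y by (auto simp: K_def)
    ultimately obtain c where c: "c < \<alpha>" "\<forall>y\<in>K. u y < c"
      using usc_less_bound_on_compact FspaceD(3)[OF assms(1)] by blast
    have "u y \<le> max c (\<alpha>/2)" if "y \<in> f -` {x}" for y
    proof (cases "\<alpha>/2 \<le> u y")
      case True
      then have "y \<in> K" using that assms(2) by (simp add: K_def level_def)
      then show ?thesis using c(2) by force
    qed simp
    then have "Sup (u ` (f -` {x})) \<le> max c (\<alpha>/2)" using fiber by (intro cSup_least) auto
    then show False using ge c(1) assms(2) fiber by (auto simp: zadeh_def)
  qed
qed

lemma level_zadeh:
  assumes "u \<in> Fspace" "0 \<le> \<alpha>"
  shows "level (zadeh f u) \<alpha> = f ` level u \<alpha>"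
proof (cases "\<alpha> = 0")
  case True
  have "{x. 0 < zadeh f u x} = f ` {x. 0 < u x}"
  proof safe
    fix x assume "0 < zadeh f u x"
    then obtain y where "f y = x" "zadeh f u x \<le> u y" using zadeh_ge_iff[OF assms(1)] by blast
    then show "x \<in> f ` {x. 0 < u x}" using \<open>0 < zadeh f u x\<close> by force
  next
    fix y assume "0 < u y"
    then have "u y \<le> zadeh f u (f y)" using zadeh_ge_iff[OF assms(1)] by blast
    then show "0 < zadeh f u (f y)" using \<open>0 < u y\<close> by linarith
  qed
  then show ?thesis
    using True closure_image_of_compact_closure[OF cont_f] FspaceD(4)[OF assms(1)]
    by (simp add: level_def)
next
  case False
  then have "0 < \<alpha>" using assms(2) by simp
  then show ?thesis using zadeh_ge_iff[OF assms(1) \<open>0 < \<alpha>\<close>] by (auto simp: level_def)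
qed

lemma zadeh_in_Fspace:
  assumes "u \<in> Fspace"
  shows "zadeh f u \<in> Fspace"
proof -
  have "closed {x. a \<le> zadeh f u x}" for a
  proof (cases "0 < a")
    case True
    then have "{x. a \<le> zadeh f u x} = f ` level u a"
      using level_zadeh[OF assms, of a] by (simp add: level_def)
    then show ?thesis
      using compact_continuous_image[OF continuous_on_subset[OF cont_f] compact_level[OF assms]] True
      by (simp add: compact_imp_closed)
  next
    case False
    then have "a \<le> zadeh f u x" for x using zadeh_bounds(1)[OF assms, of f x] by linarith
    then show ?thesis by simp
  qed
  moreover have "compact (level (zadeh f u) 0)"
    using level_zadeh[OF assms] compact_continuous_image[OF continuous_on_subset[OF cont_f] FspaceD(4)[OF assms]]
    by simp
  moreover have "level (zadeh f u) 1 \<noteq> {}" using level_zadeh[OF assms] FspaceD(5)[OF assms] by simp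
  ultimately show ?thesis using zadeh_bounds[OF assms] by (simp add: Fspace_def usc_iff_closed_superlevels)
qed

lemma zadeh_funpow_in_Fspace: "u \<in> Fspace \<Longrightarrow> (zadeh f ^^ k) u \<in> Fspace"
  by (induction k) (auto intro: zadeh_in_Fspace)

lemma level_zadeh_funpow:
  assumes "u \<in> Fspace" "0 \<le> \<alpha>"
  shows "level ((zadeh f ^^ k) u) \<alpha> = (f ^^ k) ` level u \<alpha>"
proof (induction k)
  case (Suc k)
  have "level ((zadeh f ^^ Suc k) u) \<alpha> = f ` level ((zadeh f ^^ k) u) \<alpha>"
    using level_zadeh[OF zadeh_funpow_in_Fspace[OF assms(1)] assms(2)] by simp
  also have "\<dots> = (f ^^ Suc k) ` level u \<alpha>" using Suc by (simp add: image_comp)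
  finally show ?case .
qed simp

lemma zadeh_funpow_indicator:
  assumes "K \<in> Kspace"
  shows "(zadeh f ^^ k) (indicator K) = indicator ((f ^^ k) ` K)"
proof (rule Fspace_eqI)
  show "(zadeh f ^^ k) (indicator K) \<in> Fspace" "indicator ((f ^^ k) ` K) \<in> Fspace"
    using zadeh_funpow_in_Fspace indicator_in_Fspace Kspace_image_funpow assms by blast+
  fix \<alpha> :: real assume "0 < \<alpha>"
  then have "level ((zadeh f ^^ k) (indicator K)) \<alpha> = (f ^^ k) ` level (indicator K) \<alpha>"
    using level_zadeh_funpow[OF indicator_in_Fspace[OF assms]] by simp
  then show "level ((zadeh f ^^ k) (indicator K)) \<alpha> = level (indicator ((f ^^ k) ` K)) \<alpha>"
    using \<open>0 < \<alpha>\<close> by (simp add: level_indicator_pos)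
qed

lemma zadeh_funpow_fuzzy_stack:
  assumes "finite S" "S \<subseteq> {0<..1}" "1 \<in> S" "\<forall>\<beta>\<in>S. P \<beta> \<in> Kspace"
  shows "(zadeh f ^^ k) (fuzzy_stack S P) = fuzzy_stack S (\<lambda>\<beta>. (f ^^ k) ` P \<beta>)"
proof (rule Fspace_eqI)
  have images: "\<forall>\<beta>\<in>S. (f ^^ k) ` P \<beta> \<in> Kspace" using assms(4) Kspace_image_funpow by blast
  have compact: "\<forall>\<beta>\<in>S. compact (P \<beta>)" "\<forall>\<beta>\<in>S. compact ((f ^^ k) ` P \<beta>)"
    using assms(4) images by (simp_all add: Kspace_def)
  show "(zadeh f ^^ k) (fuzzy_stack S P) \<in> Fspace"
    using zadeh_funpow_in_Fspace fuzzy_stack_in_Fspace[OF assms] by blast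
  show "fuzzy_stack S (\<lambda>\<beta>. (f ^^ k) ` P \<beta>) \<in> Fspace"
    using fuzzy_stack_in_Fspace[OF assms(1-3) images] .
  fix \<alpha> :: real assume "0 < \<alpha>"
  then have "level ((zadeh f ^^ k) (fuzzy_stack S P)) \<alpha> = (f ^^ k) ` level (fuzzy_stack S P) \<alpha>"
    using level_zadeh_funpow[OF fuzzy_stack_in_Fspace[OF assms]] by simp
  also have "\<dots> = (\<Union>\<beta>\<in>{\<beta>\<in>S. \<alpha> \<le> \<beta>}. (f ^^ k) ` P \<beta>)"
    using level_fuzzy_stack[OF assms(1,2) compact(1)] \<open>0 < \<alpha>\<close> by (simp add: image_UN)
  also have "\<dots> = level (fuzzy_stack S (\<lambda>\<beta>. (f ^^ k) ` P \<beta>)) \<alpha>"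
    using level_fuzzy_stack[OF assms(1,2) compact(2)] \<open>0 < \<alpha>\<close> by simp
  finally show "level ((zadeh f ^^ k) (fuzzy_stack S P)) \<alpha> = level (fuzzy_stack S (\<lambda>\<beta>. (f ^^ k) ` P \<beta>)) \<alpha>" .
qed

lemma d_inf_zadeh_funpow_fuzzy_stack_le:
  assumes "u \<in> Fspace" "finite S" "S \<subseteq> {0<..1}" "1 \<in> S" "\<forall>\<beta>\<in>S. P \<beta> \<in> Kspace"
    and "\<forall>\<beta>\<in>S. dH ((f ^^ k) ` P \<beta>) ((f ^^ k) ` level u \<beta>) < \<epsilon>"
    and "level_net ((zadeh f ^^ k) u) \<epsilon> {0..1} S"
  shows "d_inf ((zadeh f ^^ k) (fuzzy_stack S P)) ((zadeh f ^^ k) u) \<le> 2 * \<epsilon>"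
proof -
  have images: "\<forall>\<beta>\<in>S. (f ^^ k) ` P \<beta> \<in> Kspace" using assms(5) Kspace_image_funpow by blast
  have "hclose dist \<epsilon> ((f ^^ k) ` P \<beta>) (level ((zadeh f ^^ k) u) \<beta>)" if "\<beta> \<in> S" for \<beta>
  proof -
    have "level u \<beta> \<in> Kspace"
      using compact_level[OF assms(1)] level_nonempty[OF assms(1)] assms(3) that by (auto simp: Kspace_def)
    then have "(f ^^ k) ` level u \<beta> \<in> Kspace" by (rule Kspace_image_funpow)
    moreover have "level ((zadeh f ^^ k) u) \<beta> = (f ^^ k) ` level u \<beta>"
      using level_zadeh_funpow[OF assms(1)] assms(3) that by auto
    ultimately show ?thesis
      using images assms(6) that by (auto simp: Kspace_def intro!: dH_less_imp_hclose)
  qed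
  then have "d_inf (fuzzy_stack S (\<lambda>\<beta>. (f ^^ k) ` P \<beta>)) ((zadeh f ^^ k) u) \<le> 2 * \<epsilon>"
    using d_inf_fuzzy_stack_le[OF zadeh_funpow_in_Fspace[OF assms(1)] assms(2-4) images _ assms(7)] by blast
  then show ?thesis using zadeh_funpow_fuzzy_stack[OF assms(2-5)] by simp
qed

lemma spec_traced_Kspace_of_Fspace:
  assumes traced: "spec_traced Fspace \<rho> (zadeh f) \<delta> N s (\<lambda>r. indicator (Y r)) i j"
    and Y: "\<forall>r\<in>{1..s}. Y r \<in> Kspace" and "\<delta> < \<epsilon>"
    and near_indicator: "\<And>u K. u \<in> Fspace \<Longrightarrow> K \<in> Kspace \<Longrightarrow>
      \<rho> u (indicator K) < \<delta> \<Longrightarrow> hclose dist \<delta> (level u (1/2)) K"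
  shows "spec_traced Kspace dH (fbar f) \<epsilon> N s Y i j"
proof -
  obtain w where w: "w \<in> Fspace"
    "\<forall>r\<in>{1..s}. \<forall>k\<in>{i r..j r}. \<rho> ((zadeh f ^^ k) w) ((zadeh f ^^ k) (indicator (Y r))) < \<delta>"
    "(zadeh f ^^ (N + j s)) w = w"
    using traced unfolding spec_traced_def by blast
  have orbit: "(fbar f ^^ k) (level w (1/2)) = level ((zadeh f ^^ k) w) (1/2)" for k
    using level_zadeh_funpow[OF w(1)] by (simp add: fbar_funpow)
  have "dH ((fbar f ^^ k) (level w (1/2))) ((fbar f ^^ k) (Y r)) < \<epsilon>"
    if "r \<in> {1..s}" "k \<in> {i r..j r}" for r k
  proof -
    have wk: "(zadeh f ^^ k) w \<in> Fspace" using zadeh_funpow_in_Fspace[OF w(1)] .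
    have Yk: "(f ^^ k) ` Y r \<in> Kspace" using Kspace_image_funpow Y that(1) by blast
    have "\<rho> ((zadeh f ^^ k) w) ((zadeh f ^^ k) (indicator (Y r))) < \<delta>" using w(2) that by blast
    then have "\<rho> ((zadeh f ^^ k) w) (indicator ((f ^^ k) ` Y r)) < \<delta>"
      using zadeh_funpow_indicator Y that(1) by simp
    then have "hclose dist \<delta> (level ((zadeh f ^^ k) w) (1/2)) ((f ^^ k) ` Y r)"
      by (rule near_indicator[OF wk Yk])
    then have "dH (level ((zadeh f ^^ k) w) (1/2)) ((f ^^ k) ` Y r) \<le> \<delta>"
      using level_nonempty[OF wk] Yk unfolding dH_def
      by (intro hclose_imp_hdist_le) (auto simp: Kspace_def)
    then show ?thesis using orbit \<open>\<delta> < \<epsilon>\<close> by (simp add: fbar_funpow)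
  qed
  moreover have "(fbar f ^^ (N + j s)) (level w (1/2)) = level w (1/2)" using orbit w(3) by simp
  moreover have "level w (1/2) \<in> Kspace"
    using compact_level[OF w(1)] level_nonempty[OF w(1)] by (simp add: Kspace_def)
  ultimately show ?thesis unfolding spec_traced_def by blast
qed

lemma spec_prop_Kspace_of_Fspace:
  assumes spec: "spec_prop Fspace \<rho> (zadeh f)"
    and near_indicator: "\<And>u K \<delta>. u \<in> Fspace \<Longrightarrow> K \<in> Kspace \<Longrightarrow> \<delta> \<le> 1/4 \<Longrightarrow>
      \<rho> u (indicator K) < \<delta> \<Longrightarrow> hclose dist \<delta> (level u (1/2)) K"
  shows "spec_prop Kspace dH (fbar f)"
  unfolding spec_prop_iff
proof (intro allI impI)
  fix \<epsilon> :: real assume "0 < \<epsilon>"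
  define \<delta> where "\<delta> = min (\<epsilon>/2) (1/4)"
  have \<delta>: "0 < \<delta>" "\<delta> \<le> 1/4" "\<delta> < \<epsilon>" using \<open>0 < \<epsilon>\<close> by (auto simp: \<delta>_def)
  obtain N where N: "N \<ge> 1" "\<And>s y i j. spec_admissible Fspace N s y i j \<Longrightarrow>
      spec_traced Fspace \<rho> (zadeh f) \<delta> N s y i j"
    using spec \<delta>(1) unfolding spec_prop_iff by meson
  have "spec_traced Kspace dH (fbar f) \<epsilon> N s Y i j" if adm: "spec_admissible Kspace N s Y i j" for s Y i j
  proof -
    have Y: "\<forall>r\<in>{1..s}. Y r \<in> Kspace" using adm unfolding spec_admissible_def by blast
    then have "\<forall>r\<in>{1..s}. indicator (Y r) \<in> Fspace" using indicator_in_Fspace by blast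
    then have "spec_admissible Fspace N s (\<lambda>r. indicator (Y r)) i j"
      using adm unfolding spec_admissible_def by simp
    then show ?thesis
      using spec_traced_Kspace_of_Fspace[OF N(2) Y \<delta>(3)] near_indicator \<delta>(2) by blast
  qed
  then show "\<exists>N::nat. N \<ge> 1 \<and> (\<forall>s Y i j. spec_admissible Kspace N s Y i j \<longrightarrow>
      spec_traced Kspace dH (fbar f) \<epsilon> N s Y i j)"
    using N(1) by blast
qed

lemma periodic_compacts_tracing_levels:
  assumes spec: "\<And>Y. spec_admissible Kspace N s Y i j \<Longrightarrow> spec_traced Kspace dH (fbar f) \<epsilon> N s Y i j"
    and adm: "spec_admissible Fspace N s u i j" and "S \<subseteq> {0<..1}"
  obtains P where "\<forall>\<beta>\<in>S. P \<beta> \<in> Kspace" "\<forall>\<beta>\<in>S. (f ^^ (N + j s)) ` P \<beta> = P \<beta>"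
    "\<And>r k. r \<in> {1..s} \<Longrightarrow> k \<in> {i r..j r} \<Longrightarrow>
      \<forall>\<beta>\<in>S. dH ((f ^^ k) ` P \<beta>) ((f ^^ k) ` level (u r) \<beta>) < \<epsilon>"
proof -
  have "\<exists>P. P \<in> Kspace \<and> (\<forall>r\<in>{1..s}. \<forall>k\<in>{i r..j r}.
      dH ((f ^^ k) ` P) ((f ^^ k) ` level (u r) \<beta>) < \<epsilon>) \<and> (f ^^ (N + j s)) ` P = P"
    if "\<beta> \<in> S" for \<beta>
  proof -
    have "level (u r) \<beta> \<in> Kspace" if "r \<in> {1..s}" for r
    proof -
      have u: "u r \<in> Fspace" using adm that unfolding spec_admissible_def by blast
      have "0 \<le> \<beta>" "\<beta> \<le> 1" using \<open>S \<subseteq> {0<..1}\<close> \<open>\<beta> \<in> S\<close> by auto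
      then show ?thesis using compact_level[OF u] level_nonempty[OF u] by (simp add: Kspace_def)
    qed
    then have "spec_admissible Kspace N s (\<lambda>r. level (u r) \<beta>) i j"
      using adm unfolding spec_admissible_def by blast
    from spec[OF this] show ?thesis unfolding spec_traced_def fbar_funpow by blast
  qed
  then have "\<exists>P. \<forall>\<beta>\<in>S. P \<beta> \<in> Kspace \<and> (\<forall>r\<in>{1..s}. \<forall>k\<in>{i r..j r}.
      dH ((f ^^ k) ` P \<beta>) ((f ^^ k) ` level (u r) \<beta>) < \<epsilon>) \<and> (f ^^ (N + j s)) ` P \<beta> = P \<beta>"
    by (intro bchoice) blast
  then show ?thesis using that by blast
qed

lemma spec_traced_Fspace_of_Kspace:
  assumes spec: "\<And>Y. spec_admissible Kspace N s Y i j \<Longrightarrow> spec_traced Kspace dH (fbar f) (\<epsilon>/4) N s Y i j"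
    and adm: "spec_admissible Fspace N s u i j" and "0 < \<epsilon>"
  shows "spec_traced Fspace d_inf (zadeh f) \<epsilon> N s u i j"
proof -
  have u: "u r \<in> Fspace" if "r \<in> {1..s}" for r using adm that unfolding spec_admissible_def by blast
  define V where "V = (\<lambda>(r, k). (zadeh f ^^ k) (u r)) ` Sigma {1..s} (\<lambda>r. {i r..j r})"
  have V: "finite V" "V \<subseteq> Fspace" using u zadeh_funpow_in_Fspace by (auto simp: V_def)
  have "0 < \<epsilon>/4" using \<open>0 < \<epsilon>\<close> by simp
  obtain S where S: "finite S" "S \<subseteq> {0<..1}" "1 \<in> S" "\<forall>v\<in>V. level_net v (\<epsilon>/4) {0..1} S"
    using finite_common_level_net[OF V \<open>0 < \<epsilon>/4\<close>] by blast
  obtain P where P: "\<forall>\<beta>\<in>S. P \<beta> \<in> Kspace" "\<forall>\<beta>\<in>S. (f ^^ (N + j s)) ` P \<beta> = P \<beta>"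
    "\<And>r k. r \<in> {1..s} \<Longrightarrow> k \<in> {i r..j r} \<Longrightarrow>
      \<forall>\<beta>\<in>S. dH ((f ^^ k) ` P \<beta>) ((f ^^ k) ` level (u r) \<beta>) < \<epsilon>/4"
    using periodic_compacts_tracing_levels[OF spec adm S(2)] by blast
  define w where "w = fuzzy_stack S P"
  have "w \<in> Fspace" unfolding w_def using fuzzy_stack_in_Fspace[OF S(1-3) P(1)] .
  moreover have "(zadeh f ^^ (N + j s)) w = w"
    unfolding w_def zadeh_funpow_fuzzy_stack[OF S(1-3) P(1)] by (intro fuzzy_stack_cong) (use P(2) in blast)
  moreover have "d_inf ((zadeh f ^^ k) w) ((zadeh f ^^ k) (u r)) < \<epsilon>"
    if "r \<in> {1..s}" "k \<in> {i r..j r}" for r k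
  proof -
    have "(zadeh f ^^ k) (u r) \<in> V" using that unfolding V_def by force
    then have "level_net ((zadeh f ^^ k) (u r)) (\<epsilon>/4) {0..1} S" using S(4) by blast
    then have "d_inf ((zadeh f ^^ k) w) ((zadeh f ^^ k) (u r)) \<le> 2 * (\<epsilon>/4)"
      unfolding w_def by (rule d_inf_zadeh_funpow_fuzzy_stack_le[OF u[OF that(1)] S(1-3) P(1) P(3)[OF that]])
    then show ?thesis using \<open>0 < \<epsilon>\<close> by linarith
  qed
  ultimately show ?thesis unfolding spec_traced_def by blast
qed

lemma spec_prop_Fspace_of_Kspace:
  assumes "spec_prop Kspace dH (fbar f)"
  shows "spec_prop Fspace d_inf (zadeh f)"
  unfolding spec_prop_iff
proof (intro allI impI)
  fix \<epsilon> :: real assume "0 < \<epsilon>"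
  then obtain N where N: "N \<ge> 1" "\<And>s Y i j. spec_admissible Kspace N s Y i j \<Longrightarrow>
      spec_traced Kspace dH (fbar f) (\<epsilon>/4) N s Y i j"
    using assms unfolding spec_prop_iff by (meson divide_pos_pos zero_less_numeral)
  then show "\<exists>N::nat. N \<ge> 1 \<and> (\<forall>s u i j. spec_admissible Fspace N s u i j \<longrightarrow>
      spec_traced Fspace d_inf (zadeh f) \<epsilon> N s u i j)"
    using spec_traced_Fspace_of_Kspace[OF N(2)] \<open>0 < \<epsilon>\<close> by blast
qed

end

theorem theorem4p3:
  fixes f :: "'a::metric_space \<Rightarrow> 'a"
  assumes "continuous_on UNIV f"
  shows "(spec_prop Kspace dH (fbar f) \<longleftrightarrow> spec_prop Fspace d_inf (zadeh f))
       \<and> (spec_prop Kspace dH (fbar f) \<longleftrightarrow> spec_prop Fspace d_0 (zadeh f))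
       \<and> (spec_prop Kspace dH (fbar f) \<longleftrightarrow> spec_prop Fspace d_S (zadeh f))
       \<and> (spec_prop Kspace dH (fbar f) \<longleftrightarrow> spec_prop Fspace d_E (zadeh f))"
proof -
  have from_Kspace: "spec_prop Kspace dH (fbar f) \<Longrightarrow> spec_prop Fspace d_inf (zadeh f)"
    by (rule spec_prop_Fspace_of_Kspace[OF assms])
  have dominated: "spec_prop Fspace d_inf (zadeh f) \<Longrightarrow> spec_prop Fspace \<rho> (zadeh f)"
    if "\<And>u v. u \<in> Fspace \<Longrightarrow> v \<in> Fspace \<Longrightarrow> \<rho> u v \<le> d_inf u v" for \<rho>
    using spec_prop_dominated zadeh_in_Fspace[OF assms] that by blast
  note to_Kspace = spec_prop_Kspace_of_Fspace[OF assms]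
  have "spec_prop Kspace dH (fbar f) \<longleftrightarrow> spec_prop Fspace d_inf (zadeh f)"
    using from_Kspace to_Kspace[of d_inf] d_inf_indicator_hclose by blast
  moreover have "spec_prop Kspace dH (fbar f) \<longleftrightarrow> spec_prop Fspace d_0 (zadeh f)"
    using from_Kspace dominated[of d_0] d_0_le_d_inf to_Kspace[of d_0] d_0_indicator_hclose by blast
  moreover have "spec_prop Kspace dH (fbar f) \<longleftrightarrow> spec_prop Fspace d_S (zadeh f)"
    using from_Kspace dominated[of d_S] d_S_le_d_inf to_Kspace[of d_S] d_S_indicator_hclose by blast
  moreover have "spec_prop Kspace dH (fbar f) \<longleftrightarrow> spec_prop Fspace d_E (zadeh f)"
    using from_Kspace dominated[of d_E] d_E_le_d_inf to_Kspace[of d_E] d_E_indicator_hclose by blast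
  ultimately show ?thesis by blast
qed

end
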